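(* Let $E$ be a locally convex topological vector space with a family of seminorms $\mathfrak P$ and let $\xi\in\mathscr D'(\mathbb R^d;E)$. Suppose there exists a kernel $K\in\mathfrak N^\zeta$ with $\zeta\in(-|\mathfrak s|,0)$ such that for every $\mathfrak p\in\mathfrak P$ there is a constant $C_{\mathfrak p}$ with $\mathfrak p(\xi(f))^2\le C_{\mathfrak p}\,|\langle f,K*f\rangle_{L^2(\mathbb R^d)}|$ for all $f\in\mathscr D(\mathbb R^d)$. Then $\xi\in\mathcal C^{\zeta/2}_{\mathfrak s}(\mathbb R^d;E)$. The same holds true with $\mathbb R^d$ replaced by $\mathbb R^d\times\mathbb T^k$.
   Context: Fix a scaling $\mathfrak s=(\mathfrak s_1,\dots,\mathfrak s_d)$ of positive integers, $|\mathfrak s|=\sum_i\mathfrak s_i$, $\|x\|_{\mathfrak s}=\sum_i|x_i|^{1/\mathfrak s_i}$, $|k|_{\mathfrak s}=\sum_i\mathfrak s_ik_i$ for multi-indices $k$, and $\mathcal S^\lambda_{\mathfrak s,x}\eta(y)=\lambda^{-|\mathfrak s|}\eta(\lambda^{-\mathfrak s_1}(y_1-x_1),\dots,\lambda^{-\mathfrak s_d}(y_d-x_d))$. $\mathscr D'(\mathbb R^d;E)$ is the space of continuous linear maps $\mathscr D(\mathbb R^d)\to E$. For $\zeta\in\mathbb R$, $\mathfrak N^\zeta$ is the set of kernels $K\colon\mathbb R^d\setminus\{0\}\to\mathbb C$, smooth and with compact support, such that for every $m\in\mathbb N$, $\sup_{|k|_{\mathfrak s}\le m}\sup_{z\ne0}\|z\|_{\mathfrak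 s}^{|k|_{\mathfrak s}-\zeta}|D^kK(z)|<\infty$. Hölder–Besov spaces: for $r\in\mathbb N$, $\mathcal B^r$ is the set of $\eta\in\mathscr D(\mathbb R^d)$ supported in $\{\|y\|_{\mathfrak s}\le1\}$ with $\|\eta\|_{\mathscr C^r}\le1$ and $\mathcal B^{r,\alpha}$ the subset of those annihilating all polynomials of scaled degree $\le\alpha$. For $\alpha\in\mathbb R$ and a fixed integer $r>|\alpha|$, $\xi\in\mathcal C^\alpha_{\mathfrak s}(\mathbb R^d;E)$ iff for every compact $\mathfrak K$ and $\mathfrak p\in\mathfrak P$, $\sup_{x\in\mathfrak K}\sup_{\eta\in\mathcal B^{r,\alpha}}\sup_{\lambda\in(0,1]}\lambda^{-\alpha}\mathfrak p(\xi(\mathcal S^\lambda_{\mathfrak s,x}\eta))+\sup_{x\in\mathfrak K}\sup_{\eta\in\mathcal B^r}\mathfrak p(\xi(\mathcal S^1_{\mathfrak s,x}\eta))<\infty$. Distributions on a product with a torus are identified with distributions on Euclidean space periodic in the torus variables, and the corresponding Hölder–Besov space is the subspace of periodic elements. *)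

theory Defs
  imports "HOL-Analysis.Analysis"
begin

text \<open>Space: R^n = real^'n.  A set T of coordinates is treated as torus (period 1)
  coordinates; T = {} is the Euclidean case R^d, otherwise R^d x T^k with
  d = card(-T), k = card T.\<close>

definition is_seminorm :: "('e::real_vector \<Rightarrow> real) \<Rightarrow> bool" where
  "is_seminorm p \<longleftrightarrow> (\<forall>x. 0 \<le> p x) \<and> (\<forall>a x. p (a *\<^sub>R x) = \<bar>a\<bar> * p x)
     \<and> (\<forall>x y. p (x + y) \<le> p x + p y)"

definition partial :: "'n::finite \<Rightarrow> (real^'n \<Rightarrow> 'a::real_normed_vector) \<Rightarrow> real^'n \<Rightarrow> 'a" where
  "partial i f x = vector_derivative (\<lambda>t. f (x + t *\<^sub>R axis i 1)) (at 0)"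

fun Dlist :: "'n::finite list \<Rightarrow> (real^'n \<Rightarrow> 'a::real_normed_vector) \<Rightarrow> real^'n \<Rightarrow> 'a" where
  "Dlist [] f = f"
| "Dlist (i # is) f = partial i (Dlist is f)"

definition smooth_on :: "(real^'n::finite) set \<Rightarrow> (real^'n \<Rightarrow> 'a::real_normed_vector) \<Rightarrow> bool" where
  "smooth_on U f \<longleftrightarrow> (\<forall>is. continuous_on U (Dlist is f) \<and>
     (\<forall>i. \<forall>x\<in>U. (\<lambda>t. Dlist is f (x + t *\<^sub>R axis i 1)) differentiable (at 0)))"

text \<open>Lattice Z^T (integer in torus coordinates, zero elsewhere); the points identified with 0.\<close>
definition lattice :: "'n::finite set \<Rightarrow> (real^'n) set" where
  "lattice T = {m. (\<forall>i. i \<notin> T \<longrightarrow> m $ i = 0) \<and> (\<forall>i\<in>T. m $ i \<in> \<int>)}"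

definition cell :: "'n::finite set \<Rightarrow> (real^'n) set" where
  "cell T = {y. \<forall>i\<in>T. 0 \<le> y $ i \<and> y $ i < 1}"

definition periodic_in :: "'n::finite set \<Rightarrow> (real^'n \<Rightarrow> 'a) \<Rightarrow> bool" where
  "periodic_in T f \<longleftrightarrow> (\<forall>i\<in>T. \<forall>x. f (x + axis i 1) = f x)"

text \<open>Support compact in R^d x T^k: bounded in the non-torus coordinates.\<close>
definition supp_bounded :: "'n::finite set \<Rightarrow> real \<Rightarrow> (real^'n \<Rightarrow> 'a::zero) \<Rightarrow> bool" where
  "supp_bounded T R f \<longleftrightarrow> (\<forall>x. f x \<noteq> 0 \<longrightarrow> (\<forall>i. i \<notin> T \<longrightarrow> \<bar>x $ i\<bar> \<le> R))"

text \<open>Test functions D(R^d x T^k) (real valued), identified with periodic functions.\<close>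
definition test_fn :: "'n::finite set \<Rightarrow> (real^'n \<Rightarrow> real) \<Rightarrow> bool" where
  "test_fn T f \<longleftrightarrow> smooth_on UNIV f \<and> periodic_in T f \<and> (\<exists>R. supp_bounded T R f)"

text \<open>C^r norm: sup of all derivatives of (unscaled) order at most r.\<close>
definition Cnorm :: "nat \<Rightarrow> (real^'n::finite \<Rightarrow> real) \<Rightarrow> real" where
  "Cnorm r f = (SUP ix \<in> {(is, x). length is \<le> r}. \<bar>Dlist (fst ix) f (snd ix)\<bar>)"

definition distribution :: "'n::finite set \<Rightarrow> ('e::real_vector \<Rightarrow> real) set
    \<Rightarrow> ((real^'n \<Rightarrow> real) \<Rightarrow> 'e) \<Rightarrow> bool" where
  "distribution T P xi \<longleftrightarrow>
     (\<forall>f g. test_fn T f \<and> test_fn T g \<longrightarrow> xi (\<lambda>x. f x + g x) = xi f + xi g) \<and>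
     (\<forall>a f. test_fn T f \<longrightarrow> xi (\<lambda>x. a * f x) = a *\<^sub>R xi f) \<and>
     (\<forall>p\<in>P. \<forall>R. \<exists>C r. \<forall>f. test_fn T f \<and> supp_bounded T R f \<longrightarrow> p (xi f) \<le> C * Cnorm r f)"

definition ssum :: "('n::finite \<Rightarrow> nat) \<Rightarrow> real" where
  "ssum s = (\<Sum>i\<in>UNIV. real (s i))"

definition snorm :: "('n::finite \<Rightarrow> nat) \<Rightarrow> real^'n \<Rightarrow> real" where
  "snorm s x = (\<Sum>i\<in>UNIV. \<bar>x $ i\<bar> powr (1 / real (s i)))"

definition tnorm :: "('n::finite \<Rightarrow> nat) \<Rightarrow> 'n set \<Rightarrow> real^'n \<Rightarrow> real" where
  "tnorm s T x = (\<Sum>i\<in>UNIV. (if i \<in> T then \<bar>x $ i - of_int (round (x $ i))\<bar> else \<bar>x $ i\<bar>)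
                               powr (1 / real (s i)))"

definition scale :: "('n::finite \<Rightarrow> nat) \<Rightarrow> real \<Rightarrow> real^'n \<Rightarrow> (real^'n \<Rightarrow> real) \<Rightarrow> real^'n \<Rightarrow> real" where
  "scale s l x eta = (\<lambda>y. l powr (- ssum s) *
      eta (\<chi> i. l powr (- real (s i)) * (y $ i - x $ i)))"

definition kernel_class :: "('n::finite \<Rightarrow> nat) \<Rightarrow> 'n set \<Rightarrow> real \<Rightarrow> (real^'n \<Rightarrow> complex) \<Rightarrow> bool" where
  "kernel_class s T zeta K \<longleftrightarrow> periodic_in T K \<and> smooth_on (- lattice T) K \<and>
     (\<exists>R. supp_bounded T R K) \<and>
     (\<forall>m::nat. \<exists>C. \<forall>is z. sum_list (map s is) \<le> m \<longrightarrow> z \<notin> lattice T \<longrightarrow>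
        tnorm s T z powr (real (sum_list (map s is)) - zeta) * norm (Dlist is K z) \<le> C)"

definition conv :: "'n::finite set \<Rightarrow> (real^'n \<Rightarrow> complex) \<Rightarrow> (real^'n \<Rightarrow> real) \<Rightarrow> real^'n \<Rightarrow> complex" where
  "conv T K f x = integral\<^sup>L lborel (\<lambda>y. indicator (cell T) y *\<^sub>R (K (x - y) * complex_of_real (f y)))"

definition pairing :: "'n::finite set \<Rightarrow> (real^'n \<Rightarrow> real) \<Rightarrow> (real^'n \<Rightarrow> complex) \<Rightarrow> complex" where
  "pairing T f K = integral\<^sup>L lborel (\<lambda>x. indicator (cell T) x *\<^sub>R (complex_of_real (f x) * conv T K f x))"

text \<open>Periodisation: identifies a distribution on R^d x T^k with a periodic one on R^(d+k).\<close>
definition periodize :: "'n::finite set \<Rightarrow> (real^'n \<Rightarrow> real) \<Rightarrow> real^'n \<Rightarrow> real" where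
  "periodize T phi x = infsum (\<lambda>m. phi (x + m)) (lattice T)"

definition Bset :: "('n::finite \<Rightarrow> nat) \<Rightarrow> nat \<Rightarrow> (real^'n \<Rightarrow> real) set" where
  "Bset s r = {eta. test_fn {} eta \<and> (\<forall>y. eta y \<noteq> 0 \<longrightarrow> snorm s y \<le> 1) \<and> Cnorm r eta \<le> 1}"

definition Bmom :: "('n::finite \<Rightarrow> nat) \<Rightarrow> nat \<Rightarrow> real \<Rightarrow> (real^'n \<Rightarrow> real) set" where
  "Bmom s r alpha = {eta \<in> Bset s r. \<forall>k::'n \<Rightarrow> nat. real (\<Sum>i\<in>UNIV. s i * k i) \<le> alpha \<longrightarrow>
      integral UNIV (\<lambda>y. eta y * (\<Prod>i\<in>UNIV. (y $ i) ^ k i)) = 0}"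

definition holder_besov :: "('n::finite \<Rightarrow> nat) \<Rightarrow> real \<Rightarrow> ('e \<Rightarrow> real) set
    \<Rightarrow> ((real^'n \<Rightarrow> real) \<Rightarrow> 'e) \<Rightarrow> bool" where
  "holder_besov s alpha P u \<longleftrightarrow>
     (\<forall>r::nat. real r > \<bar>alpha\<bar> \<longrightarrow> (\<forall>Kc p. compact Kc \<and> p \<in> P \<longrightarrow>
        (\<exists>C. \<forall>x\<in>Kc. \<forall>eta\<in>Bmom s r alpha. \<forall>l\<in>{0<..1}.
            l powr (- alpha) * p (u (scale s l x eta)) \<le> C) \<and>
        (\<exists>C. \<forall>x\<in>Kc. \<forall>eta\<in>Bset s r. p (u (scale s 1 x eta)) \<le> C)))"

end

(* The rescaled periodised test functions phi = periodize (scale s l x eta) are test functions, so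
   the hypothesis bounds p (xi phi)^2 by |<phi, K * phi>|, and it suffices to show that this pairing
   is O(l^zeta) uniformly in x and eta.  Since the anisotropic norm of z dominates every
   |z_i|^(1/s_i), the kernel bound |K z| <= C ||z||^zeta factorises into a product of
   one-dimensional singularities |z_i|^(zeta/|s|), each integrable because zeta > -|s|.
   Integrating this product over the support of phi, a box of side l^(s_i) in coordinate i
   (modulo the lattice), against |phi| <= C l^(-|s|) gives the bound l^(-2|s|) l^(2|s| + zeta). *)

theory Submission
  imports Defs
begin

section \<open>Integrals on the real line and on products\<close>

lemma nn_integral_lborel_prod_cart:
  fixes g :: "'n::finite \<Rightarrow> real \<Rightarrow> ennreal"
  assumes [measurable]: "\<And>i. g i \<in> borel_measurable borel"
  shows "(\<integral>\<^sup>+x. (\<Prod>i\<in>UNIV. g i (x$i)) \<partial>lborel) = (\<Prod>i\<in>UNIV. \<integral>\<^sup>+u. g i u \<partial>lborel)"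
proof -
  define idx :: "real^'n \<Rightarrow> 'n" where "idx b = (SOME i. b = axis i 1)" for b
  have idx: "idx (axis i 1) = i" for i
    unfolding idx_def by (rule some_equality) (auto simp: axis_eq_axis)
  have Basis: "(Basis :: (real^'n) set) = (\<lambda>i. axis i 1) ` UNIV"
    by (auto simp: Basis_vec_def)
  have inj: "inj (\<lambda>i::'n. axis i (1::real))"
    by (auto simp: inj_def axis_eq_axis)
  define f where "f b = g (idx b)" for b
  have "(\<Prod>i\<in>UNIV. g i (x$i)) = (\<Prod>b\<in>Basis. f b (x \<bullet> b))" for x :: "real^'n"
    unfolding Basis f_def by (subst prod.reindex[OF inj]) (simp_all add: idx inner_axis)
  hence "(\<integral>\<^sup>+x. (\<Prod>i\<in>UNIV. g i (x$i)) \<partial>lborel)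
      = (\<integral>\<^sup>+x. (\<Prod>b\<in>Basis. f b (x \<bullet> b)) \<partial>(lborel :: (real^'n) measure))"
    by simp
  also have "\<dots> = (\<Prod>b\<in>Basis. \<integral>\<^sup>+u. f b u \<partial>lborel)"
    by (rule nn_integral_lborel_prod) (auto simp: f_def)
  also have "\<dots> = (\<Prod>i\<in>UNIV. \<integral>\<^sup>+u. g i u \<partial>lborel)"
    unfolding Basis f_def by (subst prod.reindex[OF inj]) (simp_all add: idx)
  finally show ?thesis .
qed

lemma nn_integral_sum_translates:
  fixes g :: "real \<Rightarrow> ennreal" and c :: "'k \<Rightarrow> real"
  assumes "finite F" and [measurable]: "g \<in> borel_measurable borel"
  shows "(\<integral>\<^sup>+v. (\<Sum>k\<in>F. g (c k - v)) \<partial>lborel) = of_nat (card F) * (\<integral>\<^sup>+u. g u \<partial>lborel)"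
proof -
  have "(\<integral>\<^sup>+v. (\<Sum>k\<in>F. g (c k - v)) \<partial>lborel) = (\<Sum>k\<in>F. \<integral>\<^sup>+v. g (c k - v) \<partial>lborel)"
    by (rule nn_integral_sum) auto
  also have "\<dots> = (\<Sum>k\<in>F. \<integral>\<^sup>+u. g u \<partial>lborel)"
    using nn_integral_real_affine[of g "-1"] by simp
  finally show ?thesis by simp
qed

text \<open>Unlike \<open>v powr b\<close>, which is \<open>0\<close> at \<open>v = 0\<close>, \<open>sing_powr b\<close> is \<open>\<infinity>\<close> there, so it dominates
  the kernel also at its singularity.\<close>

definition sing_powr :: "real \<Rightarrow> real \<Rightarrow> ennreal" where
  "sing_powr b v = (if v = 0 then \<infinity> else ennreal (v powr b))"

lemma sing_powr_measurable [measurable]: "sing_powr b \<in> borel_measurable borel"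
  unfolding sing_powr_def by measurable

lemma sing_powr_nonzero: "0 \<le> v \<Longrightarrow> sing_powr b v \<noteq> 0"
  unfolding sing_powr_def by auto

lemma nn_integral_sing_powr_Icc:
  assumes "-1 < b" "0 \<le> a"
  shows "(\<integral>\<^sup>+u. sing_powr b \<bar>u\<bar> * indicator {-a..a} u \<partial>lborel) \<le> ennreal (2 * (a powr (b+1) / (b+1)))"
proof -
  let ?half = "\<lambda>u. ennreal (indicator {0..a} u * u powr b)"
  have half: "(\<integral>\<^sup>+u. ?half u \<partial>lborel) = ennreal (a powr (b+1) / (b+1))"
    using nn_integral_has_integral_lebesgue[OF _ has_integral_powr_from_0[OF assms]]
    by (simp add: indicator_def)
  have "(\<integral>\<^sup>+u. sing_powr b \<bar>u\<bar> * indicator {-a..a} u \<partial>lborel)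
      = (\<integral>\<^sup>+u. ennreal (\<bar>u\<bar> powr b * indicator {-a..a} u) \<partial>lborel)"
    by (rule nn_integral_cong_AE)
       (use AE_lborel_singleton[of 0] in \<open>eventually_elim, auto simp: sing_powr_def indicator_def\<close>)
  also have "\<dots> \<le> (\<integral>\<^sup>+u. ?half u + ?half (-u) \<partial>lborel)"
    by (rule nn_integral_mono)
       (auto simp: indicator_def ennreal_plus[symmetric] simp del: ennreal_plus)
  also have "\<dots> = (\<integral>\<^sup>+u. ?half u \<partial>lborel) + (\<integral>\<^sup>+u. ?half (-u) \<partial>lborel)"
    by (rule nn_integral_add) auto
  also have "(\<integral>\<^sup>+u. ?half (-u) \<partial>lborel) = (\<integral>\<^sup>+u. ?half u \<partial>lborel)"
    using nn_integral_real_affine[of ?half "-1" 0] by simp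
  also have "(\<integral>\<^sup>+u. ?half u \<partial>lborel) + (\<integral>\<^sup>+u. ?half u \<partial>lborel) = ennreal (2 * (a powr (b+1) / (b+1)))"
    unfolding half using assms by (subst ennreal_plus[symmetric]) auto
  finally show ?thesis .
qed

lemma norm_integral_le_nn_integral:
  fixes g :: "'a \<Rightarrow> 'b::{banach, second_countable_topology}"
  shows "ennreal (norm (integral\<^sup>L M g)) \<le> (\<integral>\<^sup>+x. ennreal (norm (g x)) \<partial>M)"
  by (cases "integrable M g") (simp_all add: integral_norm_bound_ennreal not_integrable_integral_eq)

section \<open>Smooth functions\<close>

lemma eventually_line_in_open:
  fixes y :: "'a::real_normed_vector"
  assumes "open U" "y \<in> U"
  shows "eventually (\<lambda>t. y + t *\<^sub>R v \<in> U) (nhds (0::real))"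
proof -
  have "open ((\<lambda>t::real. y + t *\<^sub>R v) -` U)"
    by (rule continuous_open_vimage[OF assms(1)]) (intro continuous_intros)
  moreover have "(0::real) \<in> (\<lambda>t. y + t *\<^sub>R v) -` U" using assms by simp
  ultimately show ?thesis using eventually_nhds_in_open by fastforce
qed

lemma Dlist_cong_open:
  fixes f g :: "real^'n::finite \<Rightarrow> 'a::real_normed_vector"
  assumes "open U" "\<forall>y\<in>U. f y = g y" "y \<in> U"
  shows "Dlist is f y = Dlist is g y"
  using assms(3)
proof (induction "is" arbitrary: y)
  case Nil thus ?case using assms by simp
next
  case (Cons i "is")
  have "eventually (\<lambda>t. t \<in> UNIV \<longrightarrow>
      Dlist is f (y + t *\<^sub>R axis i 1) = Dlist is g (y + t *\<^sub>R axis i 1)) (nhds (0::real))"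
    using eventually_line_in_open[OF assms(1) Cons.prems, of "axis i 1"]
    by eventually_elim (use Cons.IH in auto)
  thus ?case
    unfolding Dlist.simps partial_def by (rule vector_derivative_cong_eq) auto
qed

lemma Dlist_zero: "Dlist is (\<lambda>_::real^'n::finite. 0::'a::real_normed_vector) = (\<lambda>_. 0)"
  by (induction "is") (auto simp: partial_def fun_eq_iff)

lemma smooth_on_has_vector_derivative:
  assumes "smooth_on UNIV f"
  shows "((\<lambda>t. Dlist is f (x + t *\<^sub>R axis i 1)) has_vector_derivative Dlist (i # is) f x) (at 0)"
proof -
  have "(\<lambda>t. Dlist is f (x + t *\<^sub>R axis i 1)) differentiable (at 0)"
    using assms unfolding smooth_on_def by blast
  thus ?thesis unfolding vector_derivative_works by (simp add: partial_def)
qed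

lemma smooth_on_UNIV_localI:
  fixes f :: "real^'n::finite \<Rightarrow> 'a::real_normed_vector"
  assumes "\<And>x. \<exists>U g. open U \<and> x \<in> U \<and> smooth_on UNIV g \<and> (\<forall>y\<in>U. f y = g y)"
  shows "smooth_on UNIV f"
proof -
  have local: "isCont (Dlist is f) x \<and>
      ((\<lambda>t. Dlist is f (x + t *\<^sub>R axis i 1)) differentiable (at 0))" for "is" i x
  proof -
    obtain U g where U: "open U" "x \<in> U" and g: "smooth_on UNIV g" and fg: "\<forall>y\<in>U. f y = g y"
      using assms by blast
    have "eventually (\<lambda>y. Dlist is g y = Dlist is f y) (nhds x)"
      using eventually_nhds_in_open[OF U]
      by eventually_elim (use Dlist_cong_open[OF U(1) fg] in auto)
    moreover have "isCont (Dlist is g) x"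
      using g unfolding smooth_on_def by (simp add: continuous_on_eq_continuous_at)
    ultimately have "isCont (Dlist is f) x"
      using isCont_cong by blast
    moreover
    have ev: "eventually (\<lambda>t. t \<in> UNIV \<longrightarrow>
        Dlist is g (x + t *\<^sub>R axis i 1) = Dlist is f (x + t *\<^sub>R axis i 1)) (nhds (0::real))"
      using eventually_line_in_open[OF U, of "axis i 1"]
      by eventually_elim (use Dlist_cong_open[OF U(1) fg] in auto)
    have "((\<lambda>t. Dlist is f (x + t *\<^sub>R axis i 1)) has_vector_derivative Dlist (i # is) g x) (at 0)"
      using smooth_on_has_vector_derivative[OF g, of "is" x i] has_vector_derivative_cong_ev[OF ev]
        Dlist_cong_open[OF U(1) fg U(2)] by simp
    ultimately show ?thesis
      using differentiableI_vector by blast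
  qed
  thus ?thesis
    unfolding smooth_on_def by (auto intro: continuous_at_imp_continuous_on)
qed

definition diag_aff :: "('n::finite \<Rightarrow> real) \<Rightarrow> real^'n \<Rightarrow> real^'n \<Rightarrow> real^'n" where
  "diag_aff a c y = (\<chi> j. a j * y$j + c$j)"

lemma diag_aff_line: "diag_aff a c (y + t *\<^sub>R axis i 1) = diag_aff a c y + (a i * t) *\<^sub>R axis i 1"
  by (simp add: diag_aff_def vec_eq_iff axis_def algebra_simps)

lemma has_vector_derivative_Dlist_diag_aff:
  fixes h :: "real^'n::finite \<Rightarrow> real"
  assumes "smooth_on UNIV h"
  shows "((\<lambda>t. k * Dlist is h (diag_aff a c (y + t *\<^sub>R axis i 1))) has_vector_derivative
            k * (a i * Dlist (i # is) h (diag_aff a c y))) (at 0)"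
proof -
  have "((\<lambda>t::real. a i * t) has_vector_derivative a i) (at 0)"
    using has_vector_derivative_mult_right[OF has_vector_derivative_id, of "a i"] by simp
  moreover have "((\<lambda>u. Dlist is h (diag_aff a c y + u *\<^sub>R axis i 1)) has_vector_derivative
      Dlist (i # is) h (diag_aff a c y)) (at ((\<lambda>t::real. a i * t) 0))"
    using smooth_on_has_vector_derivative[OF assms] by simp
  ultimately have "(((\<lambda>u. Dlist is h (diag_aff a c y + u *\<^sub>R axis i 1)) \<circ> (\<lambda>t. a i * t))
      has_vector_derivative (a i *\<^sub>R Dlist (i # is) h (diag_aff a c y))) (at 0)"
    by (rule vector_diff_chain_at)
  hence "((\<lambda>t. Dlist is h (diag_aff a c (y + t *\<^sub>R axis i 1))) has_vector_derivative
      (a i * Dlist (i # is) h (diag_aff a c y))) (at 0)"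
    by (simp add: diag_aff_line o_def)
  thus ?thesis by (rule has_vector_derivative_mult_right)
qed

lemma Dlist_diag_aff:
  fixes h :: "real^'n::finite \<Rightarrow> real"
  assumes "smooth_on UNIV h"
  shows "Dlist is (\<lambda>y. k * h (diag_aff a c y))
    = (\<lambda>y. k * prod_list (map a is) * Dlist is h (diag_aff a c y))"
proof (induction "is")
  case Nil thus ?case by simp
next
  case (Cons i "is")
  show ?case
  proof
    fix y
    have "Dlist (i # is) (\<lambda>y. k * h (diag_aff a c y)) y
        = partial i (\<lambda>y. k * prod_list (map a is) * Dlist is h (diag_aff a c y)) y"
      by (simp add: Cons.IH)
    also have "\<dots> = k * prod_list (map a is) * (a i * Dlist (i # is) h (diag_aff a c y))"
      unfolding partial_def
      by (rule vector_derivative_at[OF has_vector_derivative_Dlist_diag_aff[OF assms]])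
    finally show "Dlist (i # is) (\<lambda>y. k * h (diag_aff a c y)) y
        = k * prod_list (map a (i # is)) * Dlist (i # is) h (diag_aff a c y)"
      by (simp add: algebra_simps)
  qed
qed

lemma smooth_on_diag_aff:
  fixes h :: "real^'n::finite \<Rightarrow> real"
  assumes "smooth_on UNIV h"
  shows "smooth_on UNIV (\<lambda>y. k * h (diag_aff a c y))"
  unfolding smooth_on_def Dlist_diag_aff[OF assms]
proof (intro allI conjI ballI)
  fix "is"
  have "continuous_on UNIV (Dlist is h)" using assms unfolding smooth_on_def by blast
  moreover have "continuous_on UNIV (diag_aff a c)"
    unfolding diag_aff_def by (intro continuous_intros)
  ultimately show "continuous_on UNIV (\<lambda>y. k * prod_list (map a is) * Dlist is h (diag_aff a c y))"
    by (intro continuous_intros continuous_on_compose2[of UNIV "Dlist is h" UNIV "diag_aff a c"]) auto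
  fix i and x :: "real^'n"
  show "(\<lambda>t. k * prod_list (map a is) * Dlist is h (diag_aff a c (x + t *\<^sub>R axis i 1))) differentiable (at 0)"
    using has_vector_derivative_Dlist_diag_aff[OF assms] by (rule differentiableI_vector)
qed

lemma Dlist_sum:
  fixes g :: "'m \<Rightarrow> real^'n::finite \<Rightarrow> real"
  assumes "\<And>m. m \<in> F \<Longrightarrow> smooth_on UNIV (g m)"
  shows "Dlist is (\<lambda>y. \<Sum>m\<in>F. g m y) = (\<lambda>y. \<Sum>m\<in>F. Dlist is (g m) y)"
proof (induction "is")
  case Nil thus ?case by simp
next
  case (Cons i "is")
  show ?case
  proof
    fix y
    have "Dlist (i # is) (\<lambda>y. \<Sum>m\<in>F. g m y) y = partial i (\<lambda>y. \<Sum>m\<in>F. Dlist is (g m) y) y"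
      by (simp add: Cons.IH)
    also have "\<dots> = (\<Sum>m\<in>F. Dlist (i # is) (g m) y)"
      unfolding partial_def
      by (intro vector_derivative_at has_vector_derivative_sum smooth_on_has_vector_derivative assms)
    finally show "Dlist (i # is) (\<lambda>y. \<Sum>m\<in>F. g m y) y = (\<Sum>m\<in>F. Dlist (i # is) (g m) y)" .
  qed
qed

lemma smooth_on_sum:
  fixes g :: "'m \<Rightarrow> real^'n::finite \<Rightarrow> real"
  assumes "\<And>m. m \<in> F \<Longrightarrow> smooth_on UNIV (g m)"
  shows "smooth_on UNIV (\<lambda>y. \<Sum>m\<in>F. g m y)"
  unfolding smooth_on_def
proof (intro allI conjI ballI)
  fix "is" i and x :: "real^'n"
  have D: "Dlist is (\<lambda>y. \<Sum>m\<in>F. g m y) = (\<lambda>y. \<Sum>m\<in>F. Dlist is (g m) y)"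
    by (rule Dlist_sum[OF assms])
  show "continuous_on UNIV (Dlist is (\<lambda>y. \<Sum>m\<in>F. g m y))"
    unfolding D using assms unfolding smooth_on_def by (intro continuous_on_sum) blast
  have "((\<lambda>t. \<Sum>m\<in>F. Dlist is (g m) (x + t *\<^sub>R axis i 1)) has_vector_derivative
      (\<Sum>m\<in>F. Dlist (i # is) (g m) x)) (at 0)"
    by (intro has_vector_derivative_sum smooth_on_has_vector_derivative assms)
  thus "(\<lambda>t. Dlist is (\<lambda>y. \<Sum>m\<in>F. g m y) (x + t *\<^sub>R axis i 1)) differentiable (at 0)"
    unfolding D by (rule differentiableI_vector)
qed

lemma abs_Dlist_le_Cnorm:
  fixes f :: "real^'n::finite \<Rightarrow> real"
  assumes f: "smooth_on UNIV f" and Q: "compact Q" "\<forall>x. x \<notin> Q \<longrightarrow> f x = 0"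
    and r: "length is \<le> r"
  shows "\<bar>Dlist is f x\<bar> \<le> Cnorm r f"
proof -
  have vanish: "Dlist js f z = 0" if "z \<notin> Q" for js z
    using Dlist_cong_open[of "- Q" f "\<lambda>_. 0" z js] Q that
    by (simp add: compact_imp_closed open_Compl Dlist_zero)
  have bounded: "bdd_above (range (\<lambda>z. \<bar>Dlist js f z\<bar>))" for js
  proof -
    have "continuous_on Q (Dlist js f)"
      using f unfolding smooth_on_def by (blast intro: continuous_on_subset)
    hence "bounded (Dlist js f ` Q)" using Q by (intro compact_imp_bounded compact_continuous_image)
    then obtain B where "\<forall>v\<in>Dlist js f ` Q. norm v \<le> B" by (auto simp: bounded_iff)
    hence "\<bar>Dlist js f z\<bar> \<le> max B 0" for z
      using vanish[of z] by (cases "z \<in> Q") auto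
    thus ?thesis by (intro bdd_aboveI2) blast
  qed
  define LS where "LS = {js :: 'n list. set js \<subseteq> UNIV \<and> length js \<le> r}"
  have "finite LS" unfolding LS_def by (rule finite_lists_length_le) simp
  hence "bdd_above (\<Union>js\<in>LS. range (\<lambda>z. \<bar>Dlist js f z\<bar>))"
    using bounded by (simp add: bdd_above_UN)
  moreover have "(\<lambda>jz. \<bar>Dlist (fst jz) f (snd jz)\<bar>) ` {(js, z). length js \<le> r}
      \<subseteq> (\<Union>js\<in>LS. range (\<lambda>z. \<bar>Dlist js f z\<bar>))"
    by (auto simp: LS_def)
  ultimately have "bdd_above ((\<lambda>jz. \<bar>Dlist (fst jz) f (snd jz)\<bar>) ` {(js, z). length js \<le> r})"
    by (rule bdd_above_mono)
  from cSUP_upper[OF _ this, of "(is, x)"] r show ?thesis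
    by (simp add: Cnorm_def)
qed

section \<open>Periodisation of functions supported in small boxes\<close>

lemma finite_card_Ints_Icc:
  fixes a :: real and w :: nat
  shows "finite (\<int> \<inter> {a..a + real w}) \<and> card (\<int> \<inter> {a..a + real w}) \<le> w + 1"
proof -
  have sub: "\<int> \<inter> {a..a + real w} \<subseteq> of_int ` {\<lceil>a\<rceil>..\<lceil>a\<rceil> + int w}"
  proof
    fix k assume "k \<in> \<int> \<inter> {a..a + real w}"
    then obtain j where j: "k = of_int j" "a \<le> of_int j" "of_int j \<le> a + real w"
      by (auto elim: Ints_cases)
    have "(of_int j::real) < of_int (\<lceil>a\<rceil> + int w + 1)"
      using j(3) le_of_int_ceiling[of a] by simp linarith
    hence "j \<le> \<lceil>a\<rceil> + int w" by linarith
    moreover have "\<lceil>a\<rceil> \<le> j" using j by (simp add: ceiling_le)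
    ultimately show "k \<in> of_int ` {\<lceil>a\<rceil>..\<lceil>a\<rceil> + int w}" using j by auto
  qed
  have "card (\<int> \<inter> {a..a + real w}) \<le> card (of_int ` {\<lceil>a\<rceil>..\<lceil>a\<rceil> + int w} :: real set)"
    by (rule card_mono[OF _ sub]) auto
  also have "\<dots> \<le> card {\<lceil>a\<rceil>..\<lceil>a\<rceil> + int w}" by (rule card_image_le) auto
  finally show ?thesis using finite_subset[OF sub] by auto
qed

lemma vec_box_finite_card:
  fixes S :: "'n::finite \<Rightarrow> 'a set"
  assumes "\<And>i. finite (S i)"
  shows "finite {m::'a^'n. \<forall>i. m$i \<in> S i}" and "card {m::'a^'n. \<forall>i. m$i \<in> S i} = (\<Prod>i\<in>UNIV. card (S i))"
proof -
  have bij: "bij_betw vec_nth {m::'a^'n. \<forall>i. m$i \<in> S i} (PiE UNIV S)"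
    by (rule bij_betw_byWitness[where f'=vec_lambda]) (auto simp: PiE_UNIV_domain)
  show "finite {m::'a^'n. \<forall>i. m$i \<in> S i}"
    using bij_betw_finite[OF bij] assms by (simp add: finite_PiE)
  show "card {m::'a^'n. \<forall>i. m$i \<in> S i} = (\<Prod>i\<in>UNIV. card (S i))"
    using bij_betw_same_card[OF bij] by (simp add: card_PiE)
qed

lemma lattice_Ints: "m \<in> lattice T \<Longrightarrow> m$i \<in> \<int>"
  and lattice_zero: "m \<in> lattice T \<Longrightarrow> i \<notin> T \<Longrightarrow> m$i = 0"
  unfolding lattice_def by auto

definition supp_in_box :: "('n::finite \<Rightarrow> real) \<Rightarrow> real^'n \<Rightarrow> (real^'n \<Rightarrow> real) \<Rightarrow> bool" where
  "supp_in_box L x0 phi \<longleftrightarrow> (\<forall>z. phi z \<noteq> 0 \<longrightarrow> (\<forall>i. \<bar>z$i - x0$i\<bar> \<le> L i))"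

definition near_mod :: "'n::finite set \<Rightarrow> ('n \<Rightarrow> real) \<Rightarrow> real^'n \<Rightarrow> real^'n \<Rightarrow> bool" where
  "near_mod T L x0 x \<longleftrightarrow> (\<exists>m\<in>lattice T. \<forall>i. \<bar>x$i + m$i - x0$i\<bar> \<le> L i)"

lemma near_modE:
  assumes "near_mod T L x0 x"
  obtains k where "k \<in> \<int>" "i \<notin> T \<Longrightarrow> k = 0" "\<bar>x$i + k - x0$i\<bar> \<le> L i"
  using assms lattice_Ints lattice_zero unfolding near_mod_def by blast

lemma periodize_eq_sum:
  assumes "finite F" "F \<subseteq> lattice T" "\<And>m. m \<in> lattice T \<Longrightarrow> m \<notin> F \<Longrightarrow> phi (x + m) = 0"
  shows "periodize T phi x = (\<Sum>m\<in>F. phi (x + m))"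
proof -
  have "periodize T phi x = infsum (\<lambda>m. phi (x + m)) F"
    unfolding periodize_def by (rule infsum_cong_neutral) (use assms in auto)
  thus ?thesis using assms(1) by simp
qed

lemma periodize_nonzero_imp_near_mod:
  assumes "supp_in_box L x0 phi" "periodize T phi x \<noteq> 0"
  shows "near_mod T L x0 x"
proof -
  obtain m where "m \<in> lattice T" "phi (x + m) \<noteq> 0"
    using assms(2) infsum_0[of "lattice T" "\<lambda>m. phi (x + m)"] unfolding periodize_def by blast
  thus ?thesis using assms(1) unfolding supp_in_box_def near_mod_def by force
qed

lemma periodize_locally_finite_sum:
  fixes phi :: "real^'n::finite \<Rightarrow> real"
  assumes phi: "supp_in_box L x0 phi" and L: "\<forall>i. L i \<le> 1"
  obtains F where "finite F" "F \<subseteq> lattice T" "card F \<le> 5 ^ CARD('n)"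
    "\<forall>y\<in>ball x1 1. periodize T phi y = (\<Sum>m\<in>F. phi (y + m))"
proof
  define S where "S i = \<int> \<inter> {x0$i - x1$i - 2 .. x0$i - x1$i - 2 + real 4}" for i
  define Box where "Box = {m::real^'n. \<forall>i. m$i \<in> S i}"
  have finS: "finite (S i)" and cardS: "card (S i) \<le> 5" for i
    using finite_card_Ints_Icc[of "x0$i - x1$i - 2" 4] by (auto simp: S_def)
  have "card Box = (\<Prod>i\<in>UNIV. card (S i))"
    unfolding Box_def by (rule vec_box_finite_card(2)[OF finS])
  also have "\<dots> \<le> 5 ^ CARD('n)"
    using prod_mono[of UNIV "\<lambda>i. card (S i)" "\<lambda>_. 5"] cardS by simp
  finally have cardBox: "card Box \<le> 5 ^ CARD('n)" .
  have finBox: "finite Box" unfolding Box_def by (rule vec_box_finite_card(1)[OF finS])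
  show "finite (lattice T \<inter> Box)" "lattice T \<inter> Box \<subseteq> lattice T" using finBox by auto
  show "card (lattice T \<inter> Box) \<le> 5 ^ CARD('n)"
    using card_mono[OF finBox, of "lattice T \<inter> Box"] cardBox by auto
  show "\<forall>y\<in>ball x1 1. periodize T phi y = (\<Sum>m\<in>lattice T \<inter> Box. phi (y + m))"
  proof
    fix y assume y: "y \<in> ball x1 1"
    show "periodize T phi y = (\<Sum>m\<in>lattice T \<inter> Box. phi (y + m))"
    proof (rule periodize_eq_sum)
      fix m assume m: "m \<in> lattice T" "m \<notin> lattice T \<inter> Box"
      show "phi (y + m) = 0"
      proof (rule ccontr)
        assume "phi (y + m) \<noteq> 0"
        hence near: "\<bar>(y + m)$i - x0$i\<bar> \<le> 1" for i
          using phi L unfolding supp_in_box_def by (meson order_trans)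
        have close: "\<bar>(x1 - y)$i\<bar> < 1" for i
          using component_le_norm_cart[of "x1 - y" i] y by (simp add: dist_norm)
        have "x0$i - x1$i - 2 \<le> m$i \<and> m$i \<le> x0$i - x1$i + 2" for i
          using near[of i] close[of i] by (auto simp: abs_le_iff abs_less_iff)
        hence "m \<in> Box"
          using lattice_Ints[OF m(1)] unfolding Box_def S_def by (auto simp: algebra_simps)
        thus False using m by simp
      qed
    qed (use finBox in auto)
  qed
qed

lemma periodic_periodize: "periodic_in T (periodize T phi)"
  unfolding periodic_in_def
proof (intro ballI allI)
  fix i x assume i: "i \<in> T"
  have bij: "bij_betw (\<lambda>m. axis i 1 + m) (lattice T) (lattice T)"
    by (rule bij_betw_byWitness[where f'="\<lambda>m. m - axis i 1"])
       (use i in \<open>auto simp: lattice_def axis_def\<close>)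
  have "periodize T phi (x + axis i 1) = infsum (\<lambda>m. phi (x + (axis i 1 + m))) (lattice T)"
    unfolding periodize_def by (simp add: add.assoc)
  also have "\<dots> = periodize T phi x"
    unfolding periodize_def by (rule infsum_reindex_bij_betw[OF bij])
  finally show "periodize T phi (x + axis i 1) = periodize T phi x" .
qed

lemma smooth_on_periodize:
  fixes phi :: "real^'n::finite \<Rightarrow> real"
  assumes "smooth_on UNIV phi" "supp_in_box L x0 phi" "\<forall>i. L i \<le> 1"
  shows "smooth_on UNIV (periodize T phi)"
proof (rule smooth_on_UNIV_localI)
  fix x1 :: "real^'n"
  obtain F where "\<forall>y\<in>ball x1 1. periodize T phi y = (\<Sum>m\<in>F. phi (y + m))"
    using periodize_locally_finite_sum[OF assms(2,3)] by blast
  moreover have "phi (y + m) = 1 * phi (diag_aff (\<lambda>_. 1) m y)" for y m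
    by (simp add: diag_aff_def plus_vec_def)
  ultimately have "\<forall>y\<in>ball x1 1. periodize T phi y = (\<Sum>m\<in>F. 1 * phi (diag_aff (\<lambda>_. 1) m y))"
    by simp
  moreover have "smooth_on UNIV (\<lambda>y. \<Sum>m\<in>F. 1 * phi (diag_aff (\<lambda>_. 1) m y))"
    by (intro smooth_on_sum smooth_on_diag_aff assms(1))
  ultimately show "\<exists>U g. open U \<and> x1 \<in> U \<and> smooth_on UNIV g \<and> (\<forall>y\<in>U. periodize T phi y = g y)"
    by (intro exI[of _ "ball x1 1"]) auto
qed

lemma supp_bounded_periodize:
  assumes "supp_in_box L x0 phi" "\<forall>i. L i \<le> 1"
  shows "supp_bounded T ((\<Sum>j\<in>UNIV. \<bar>x0$j\<bar>) + 1) (periodize T phi)"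
  unfolding supp_bounded_def
proof (intro allI impI)
  fix x i assume nonzero: "periodize T phi x \<noteq> 0" and i: "i \<notin> T"
  obtain k where "i \<notin> T \<Longrightarrow> k = 0" "\<bar>x$i + k - x0$i\<bar> \<le> L i"
    using near_modE[OF periodize_nonzero_imp_near_mod[OF assms(1) nonzero]] by blast
  hence "\<bar>x$i - x0$i\<bar> \<le> L i" using i by simp
  hence "\<bar>x$i - x0$i\<bar> \<le> 1" using assms(2) order_trans by blast
  moreover have "\<bar>x0$i\<bar> \<le> (\<Sum>j\<in>UNIV. \<bar>x0$j\<bar>)" by (rule member_le_sum) auto
  ultimately show "\<bar>x$i\<bar> \<le> (\<Sum>j\<in>UNIV. \<bar>x0$j\<bar>) + 1" by linarith
qed

lemma test_fn_periodize:
  assumes "smooth_on UNIV phi" "supp_in_box L x0 phi" "\<forall>i. L i \<le> 1"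
  shows "test_fn T (periodize T phi)"
  using smooth_on_periodize[OF assms] periodic_periodize supp_bounded_periodize[OF assms(2,3)]
  unfolding test_fn_def by blast

lemma abs_periodize_le:
  fixes phi :: "real^'n::finite \<Rightarrow> real"
  assumes "supp_in_box L x0 phi" "\<forall>i. L i \<le> 1" "\<forall>z. \<bar>phi z\<bar> \<le> A"
  shows "\<bar>periodize T phi x\<bar> \<le> 5 ^ CARD('n) * A"
proof -
  obtain F where F: "finite F" "F \<subseteq> lattice T" "card F \<le> 5 ^ CARD('n)"
    and sum: "\<forall>y\<in>ball x 1. periodize T phi y = (\<Sum>m\<in>F. phi (y + m))"
    by (rule periodize_locally_finite_sum[OF assms(1,2)])
  have "\<bar>periodize T phi x\<bar> = \<bar>\<Sum>m\<in>F. phi (x + m)\<bar>"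
    using sum by simp
  also have "\<dots> \<le> (\<Sum>m\<in>F. \<bar>phi (x + m)\<bar>)"
    by (rule sum_abs)
  also have "\<dots> \<le> (\<Sum>m\<in>F. A)"
    by (rule sum_mono) (use assms(3) in blast)
  also have "\<dots> = real (card F) * A"
    by simp
  also have "\<dots> \<le> 5 ^ CARD('n) * A"
  proof (rule mult_right_mono)
    show "real (card F) \<le> 5 ^ CARD('n)"
      using F(3) by (metis of_nat_le_iff of_nat_numeral of_nat_power)
    show "0 \<le> A" using assms(3)[rule_format, of x] by linarith
  qed
  finally show ?thesis .
qed

section \<open>Rescaled test functions\<close>

lemma Bset_support:
  assumes "eta \<in> Bset s r" "eta y \<noteq> 0" "0 < s i"
  shows "\<bar>y$i\<bar> \<le> 1"
proof (rule ccontr)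
  assume "\<not> \<bar>y$i\<bar> \<le> 1"
  hence "1 < \<bar>y$i\<bar> powr (1 / real (s i))"
    using assms(3) by (intro gr_one_powr) auto
  also have "\<dots> \<le> snorm s y"
    unfolding snorm_def by (rule member_le_sum) auto
  also have "\<dots> \<le> 1" using assms(1,2) by (auto simp: Bset_def)
  finally show False by simp
qed

lemma Bset_abs_le_1:
  assumes eta: "eta \<in> Bset s r" and s_pos: "\<forall>i. 0 < s i"
  shows "\<bar>eta y\<bar> \<le> 1"
proof -
  have "\<forall>x. x \<notin> cbox (\<chi> i. -1) (\<chi> i. 1) \<longrightarrow> eta x = 0"
    using Bset_support[OF eta] s_pos by (force simp: mem_box_cart abs_le_iff)
  moreover have "smooth_on UNIV eta" "Cnorm r eta \<le> 1"
    using eta by (simp_all add: Bset_def test_fn_def)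
  ultimately show ?thesis
    using abs_Dlist_le_Cnorm[of eta "cbox (\<chi> i. -1) (\<chi> i. 1)" "[]" r y] by simp
qed

lemma scale_eq_diag_aff:
  "scale s l x0 eta = (\<lambda>y. l powr (- ssum s) *
     eta (diag_aff (\<lambda>j. l powr (- real (s j))) (\<chi> j. - (l powr (- real (s j)) * x0$j)) y))"
proof -
  have "(\<chi> i. l powr (- real (s i)) * (y $ i - x0 $ i))
      = diag_aff (\<lambda>j. l powr (- real (s j))) (\<chi> j. - (l powr (- real (s j)) * x0$j)) y" for y
    by (simp add: diag_aff_def vec_eq_iff algebra_simps)
  thus ?thesis by (simp add: scale_def)
qed

lemma smooth_on_scale: "smooth_on UNIV eta \<Longrightarrow> smooth_on UNIV (scale s l x0 eta)"
  unfolding scale_eq_diag_aff by (rule smooth_on_diag_aff)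

lemma supp_in_box_scale:
  assumes "eta \<in> Bset s r" "\<forall>i. 0 < s i" "0 < l"
  shows "supp_in_box (\<lambda>i. l powr real (s i)) x0 (scale s l x0 eta)"
  unfolding supp_in_box_def
proof (intro allI impI)
  fix z i assume "scale s l x0 eta z \<noteq> 0"
  hence "eta (\<chi> i. l powr (- real (s i)) * (z $ i - x0 $ i)) \<noteq> 0"
    by (auto simp: scale_def)
  from Bset_support[OF assms(1) this] assms(2)
  have "l powr (- real (s i)) * \<bar>z $ i - x0 $ i\<bar> \<le> 1"
    by (simp add: abs_mult)
  thus "\<bar>z$i - x0$i\<bar> \<le> l powr real (s i)"
    using assms(3) by (simp add: powr_minus field_simps)
qed

lemma abs_scale_le:
  assumes "\<forall>y. \<bar>eta y\<bar> \<le> 1" "0 < l"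
  shows "\<bar>scale s l x0 eta z\<bar> \<le> l powr (- ssum s)"
  using assms mult_left_mono[of _ 1 "l powr (- ssum s)"] by (simp add: scale_def abs_mult)

lemma test_fn_periodize_scale:
  assumes "eta \<in> Bset s r" "\<forall>i. 0 < s i" "0 < l" "l \<le> 1"
  shows "test_fn T (periodize T (scale s l x0 eta))"
proof (rule test_fn_periodize)
  show "smooth_on UNIV (scale s l x0 eta)"
    using assms(1) by (intro smooth_on_scale) (simp add: Bset_def test_fn_def)
  show "supp_in_box (\<lambda>i. l powr real (s i)) x0 (scale s l x0 eta)"
    by (rule supp_in_box_scale[OF assms(1-3)])
  show "\<forall>i. l powr real (s i) \<le> 1"
    using assms(3,4) by (auto intro: powr_le1)
qed

section \<open>The kernel bound in product form\<close>

lemma ssum_pos: "\<forall>i. 0 < s i \<Longrightarrow> 0 < ssum (s::'n::finite \<Rightarrow> nat)"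
  unfolding ssum_def by (intro sum_pos) auto

text \<open>Each coordinate term is at most the whole sum, and \<open>zeta\<close> splits as the sum of the
  \<open>zeta * s i / ssum s\<close>.\<close>

lemma sum_powr_powr_le_prod:
  fixes s :: "'n::finite \<Rightarrow> nat" and d :: "'n \<Rightarrow> real"
  assumes s_pos: "\<forall>i. 0 < s i" and zeta: "zeta \<le> 0" and d: "\<forall>i. 0 < d i"
  shows "(\<Sum>i\<in>UNIV. d i powr (1 / real (s i))) powr zeta \<le> (\<Prod>i\<in>UNIV. d i powr (zeta / ssum s))"
proof -
  define S where "S = ssum s"
  define N where "N = (\<Sum>i\<in>UNIV. d i powr (1 / real (s i)))"
  have S: "0 < S" using ssum_pos[OF s_pos] by (simp add: S_def)
  have le: "d i powr (1 / real (s i)) \<le> N" for i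
    unfolding N_def by (rule member_le_sum) auto
  have N: "0 < N" using le[of undefined] d by (smt (verit) powr_gt_zero)
  have "(\<Sum>i\<in>UNIV. zeta * real (s i) / S) = zeta"
    using S by (simp add: S_def ssum_def sum_divide_distrib[symmetric] sum_distrib_left[symmetric])
  hence "N powr zeta = (\<Prod>i\<in>UNIV. N powr (zeta * real (s i) / S))"
    using N by (simp add: powr_sum[symmetric])
  also have "\<dots> \<le> (\<Prod>i\<in>UNIV. d i powr (zeta / S))"
  proof (rule prod_mono, safe)
    fix i
    have "N powr (zeta * real (s i) / S) \<le> (d i powr (1 / real (s i))) powr (zeta * real (s i) / S)"
      by (rule powr_mono2')
         (use zeta S d[rule_format, of i] le[of i] in \<open>auto simp: divide_nonpos_pos mult_nonpos_nonneg\<close>)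
    also have "\<dots> = d i powr (zeta / S)"
      using s_pos[rule_format, of i] by (simp add: powr_powr)
    finally show "N powr (zeta * real (s i) / S) \<le> d i powr (zeta / S)" .
  qed simp
  finally show ?thesis by (simp add: N_def S_def)
qed

definition coord_dist :: "'n set \<Rightarrow> 'n \<Rightarrow> real \<Rightarrow> real" where
  "coord_dist T i u = (if i \<in> T then \<bar>u - of_int (round u)\<bar> else \<bar>u\<bar>)"

lemma coord_dist_nonneg: "0 \<le> coord_dist T i u"
  by (simp add: coord_dist_def)

lemma tnorm_eq_sum_coord_dist: "tnorm s T z = (\<Sum>i\<in>UNIV. coord_dist T i (z$i) powr (1 / real (s i)))"
  unfolding tnorm_def coord_dist_def by (rule sum.cong) auto

lemma kernel_bound_product:
  fixes s :: "'n::finite \<Rightarrow> nat" and K :: "real^'n \<Rightarrow> complex"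
  assumes s_pos: "\<forall>i. 0 < s i" and zeta: "zeta \<le> 0" and C0: "0 < C0"
    and K: "\<forall>z. z \<notin> lattice T \<longrightarrow> tnorm s T z powr (- zeta) * cmod (K z) \<le> C0"
  shows "ennreal (cmod (K z)) \<le> ennreal C0 * (\<Prod>i\<in>UNIV. sing_powr (zeta / ssum s) (coord_dist T i (z$i)))"
proof (cases "\<exists>i. coord_dist T i (z$i) = 0")
  case True
  then obtain i where "sing_powr (zeta / ssum s) (coord_dist T i (z$i)) = \<infinity>"
    by (auto simp: sing_powr_def)
  hence "(\<Prod>i\<in>UNIV. sing_powr (zeta / ssum s) (coord_dist T i (z$i))) = \<infinity>"
    by (auto simp: ennreal_prod_eq_top sing_powr_nonzero coord_dist_nonneg)
  thus ?thesis using C0 by (simp add: ennreal_mult_top)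
next
  case False
  hence pos: "\<forall>i. 0 < coord_dist T i (z$i)"
    using coord_dist_nonneg by (metis order_le_less)
  have "z \<notin> lattice T"
  proof
    assume "z \<in> lattice T"
    hence "coord_dist T i (z$i) = 0" for i
      unfolding lattice_def coord_dist_def by (auto elim!: Ints_cases)
    thus False using False by blast
  qed
  have "0 < coord_dist T i (z$i) powr (1 / real (s i))" for i
    using pos[rule_format, of i] by simp
  hence tnorm_pos: "0 < tnorm s T z"
    unfolding tnorm_eq_sum_coord_dist by (intro sum_pos) auto
  have "tnorm s T z powr (- zeta) * cmod (K z) \<le> C0"
    using K \<open>z \<notin> lattice T\<close> by blast
  hence "cmod (K z) \<le> C0 / tnorm s T z powr (- zeta)"
    using tnorm_pos by (simp add: pos_le_divide_eq mult.commute)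
  also have "\<dots> = C0 * tnorm s T z powr zeta"
    by (simp add: powr_minus divide_inverse)
  also have "\<dots> \<le> C0 * (\<Prod>i\<in>UNIV. coord_dist T i (z$i) powr (zeta / ssum s))"
    unfolding tnorm_eq_sum_coord_dist
    using sum_powr_powr_le_prod[OF s_pos zeta pos] C0 by (simp add: mult_left_mono)
  finally have "ennreal (cmod (K z)) \<le> ennreal (C0 * (\<Prod>i\<in>UNIV. coord_dist T i (z$i) powr (zeta / ssum s)))"
    by (rule ennreal_leI)
  also have "\<dots> = ennreal C0 * (\<Prod>i\<in>UNIV. sing_powr (zeta / ssum s) (coord_dist T i (z$i)))"
  proof -
    have "(\<Prod>i\<in>UNIV. sing_powr (zeta / ssum s) (coord_dist T i (z$i)))
        = (\<Prod>i\<in>UNIV. ennreal (coord_dist T i (z$i) powr (zeta / ssum s)))"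
      using pos by (intro prod.cong) (auto simp: sing_powr_def less_le)
    thus ?thesis using C0 by (simp add: ennreal_mult prod_nonneg prod_ennreal)
  qed
  finally show ?thesis .
qed

section \<open>Estimate of the pairing\<close>

lemma coord_dist_diff_le:
  assumes "near_mod T L x0 x" "near_mod T L x0 y"
  shows "coord_dist T i (x$i - y$i) \<le> 2 * L i"
proof -
  obtain kx where kx: "kx \<in> \<int>" "i \<notin> T \<Longrightarrow> kx = 0" "\<bar>x$i + kx - x0$i\<bar> \<le> L i"
    using near_modE[OF assms(1)] by blast
  obtain ky where ky: "ky \<in> \<int>" "i \<notin> T \<Longrightarrow> ky = 0" "\<bar>y$i + ky - x0$i\<bar> \<le> L i"
    using near_modE[OF assms(2)] by blast
  have d: "\<bar>x$i - y$i - (ky - kx)\<bar> \<le> 2 * L i" using kx(3) ky(3) by linarith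
  show ?thesis
  proof (cases "i \<in> T")
    case True
    obtain m where m: "ky - kx = of_int m" using kx(1) ky(1) by (metis Ints_cases Ints_diff)
    have "\<bar>x$i - y$i - of_int (round (x$i - y$i))\<bar> \<le> \<bar>x$i - y$i - of_int m\<bar>"
      by (rule round_diff_minimal)
    thus ?thesis using True d m by (simp add: coord_dist_def)
  next
    case False thus ?thesis using d kx(2) ky(2) by (simp add: coord_dist_def)
  qed
qed

text \<open>For points of the fundamental cell the integer nearest to a difference of torus coordinates
  is one of \<open>-1, 0, 1\<close>.\<close>

lemma sing_powr_coord_dist_le_translates:
  assumes "coord_dist T i w \<le> a" "i \<in> T \<Longrightarrow> -1 < w \<and> w < 1"
  shows "sing_powr b (coord_dist T i w)
    \<le> (\<Sum>k\<in>{-1,0,1::real}. sing_powr b \<bar>w - k\<bar> * indicator {-a..a} (w - k))"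
proof -
  define k :: real where "k = (if i \<in> T then of_int (round w) else 0)"
  have "-1 \<le> round w \<and> round w \<le> 1" if "i \<in> T"
    using assms(2)[OF that] unfolding round_def by linarith
  hence "k \<in> {-1,0,1}" by (auto simp: k_def)
  moreover have "sing_powr b (coord_dist T i w) = sing_powr b \<bar>w - k\<bar> * indicator {-a..a} (w - k)"
    using assms(1) by (auto simp: coord_dist_def k_def indicator_def)
  ultimately show ?thesis
    by (simp only:) (rule member_le_sum, auto)
qed

lemma one_le_sum_translates_indicator:
  assumes L: "L i \<le> 1" and x: "near_mod T L x0 x" "x \<in> cell T"
  shows "1 \<le> (\<Sum>k\<in>insert 0 (\<int> \<inter> {x0$i - 2 .. x0$i - 2 + real 3}).
               indicator {-L i..L i} (x0$i - k - x$i) :: ennreal)"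
proof -
  obtain k where k: "k \<in> \<int>" "i \<notin> T \<Longrightarrow> k = 0" "\<bar>x$i + k - x0$i\<bar> \<le> L i"
    using near_modE[OF x(1)] by blast
  have "k \<in> insert 0 (\<int> \<inter> {x0$i - 2 .. x0$i - 2 + real 3})"
  proof (cases "i \<in> T")
    case True
    hence "0 \<le> x$i" "x$i < 1" using x(2) by (auto simp: cell_def)
    thus ?thesis using k(1,3) L by auto
  qed (use k(2) in simp)
  moreover have "indicator {-L i..L i} (x0$i - k - x$i) = (1::ennreal)"
    using k(3) by (auto simp: indicator_def)
  moreover have "finite (\<int> \<inter> {x0$i - 2 .. x0$i - 2 + real 3})"
    using finite_card_Ints_Icc by blast
  ultimately show ?thesis
    by (metis finite_insert member_le_sum zero_le)
qed

lemma norm_conv_le: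
  fixes f :: "real^'n::finite \<Rightarrow> real" and K :: "real^'n \<Rightarrow> complex"
  assumes L: "\<forall>i. 0 \<le> L i" and b: "-1 < b" and A: "0 \<le> A" and C0: "0 \<le> C0"
    and K: "\<forall>z. ennreal (cmod (K z)) \<le> ennreal C0 * (\<Prod>i\<in>UNIV. sing_powr b (coord_dist T i (z$i)))"
    and f_supp: "\<forall>y. f y \<noteq> 0 \<longrightarrow> near_mod T L x0 y" and f_bound: "\<forall>y. \<bar>f y\<bar> \<le> A"
    and x: "x \<in> cell T" "near_mod T L x0 x"
  shows "cmod (conv T K f x) \<le> A * C0 * (\<Prod>i\<in>UNIV. 6 * ((2 * L i) powr (b+1) / (b+1)))"
proof -
  define g where "g i u = sing_powr b \<bar>u\<bar> * indicator {-(2 * L i)..2 * L i} u" for i u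
  have [measurable]: "g i \<in> borel_measurable borel" for i
    unfolding g_def by measurable
  have pointwise: "ennreal (norm (indicator (cell T) y *\<^sub>R (K (x - y) * complex_of_real (f y))))
      \<le> ennreal A * ennreal C0 * (\<Prod>i\<in>UNIV. \<Sum>k\<in>{-1,0,1}. g i (x$i - k - y$i))" for y
  proof (cases "y \<in> cell T \<and> f y \<noteq> 0")
    case True
    hence y: "y \<in> cell T" "near_mod T L x0 y" using f_supp by auto
    have "sing_powr b (coord_dist T i ((x - y)$i)) \<le> (\<Sum>k\<in>{-1,0,1}. g i (x$i - k - y$i))" for i
    proof -
      have "i \<in> T \<Longrightarrow> -1 < x$i - y$i \<and> x$i - y$i < 1"
        using x(1) y(1) by (force simp: cell_def)
      moreover have "x$i - k - y$i = x$i - y$i - k" for k :: real by simp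
      ultimately show ?thesis
        using sing_powr_coord_dist_le_translates[OF coord_dist_diff_le[OF x(2) y(2)]]
        by (simp only: g_def vector_minus_component)
    qed
    hence "ennreal (cmod (K (x - y))) \<le> ennreal C0 * (\<Prod>i\<in>UNIV. \<Sum>k\<in>{-1,0,1}. g i (x$i - k - y$i))"
      using K[rule_format, of "x - y"] by (meson mult_left_mono prod_mono_ennreal order_trans zero_le)
    moreover have "ennreal \<bar>f y\<bar> \<le> ennreal A" using f_bound by (simp add: ennreal_leI)
    ultimately have "ennreal \<bar>f y\<bar> * ennreal (cmod (K (x - y)))
        \<le> ennreal A * (ennreal C0 * (\<Prod>i\<in>UNIV. \<Sum>k\<in>{-1,0,1}. g i (x$i - k - y$i)))"
      by (intro mult_mono) simp_all
    moreover have "ennreal (norm (indicator (cell T) y *\<^sub>R (K (x - y) * complex_of_real (f y))))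
        = ennreal \<bar>f y\<bar> * ennreal (cmod (K (x - y)))"
      using y by (simp add: norm_mult ennreal_mult[symmetric] mult.commute)
    ultimately show ?thesis by (simp add: mult.assoc)
  qed (auto simp: indicator_def)
  have "ennreal (cmod (conv T K f x))
      \<le> (\<integral>\<^sup>+y. ennreal A * ennreal C0 * (\<Prod>i\<in>UNIV. \<Sum>k\<in>{-1,0,1}. g i (x$i - k - y$i)) \<partial>lborel)"
    unfolding conv_def by (rule order_trans[OF norm_integral_le_nn_integral nn_integral_mono[OF pointwise]])
  also have "\<dots> = ennreal A * ennreal C0 *
      (\<integral>\<^sup>+y. (\<Prod>i\<in>UNIV. (\<lambda>v. \<Sum>k\<in>{-1,0,1}. g i (x$i - k - v)) (y$i)) \<partial>lborel)"
    by (rule nn_integral_cmult) measurable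
  also have "\<dots> = ennreal A * ennreal C0 * (\<Prod>i\<in>UNIV. \<integral>\<^sup>+v. (\<Sum>k\<in>{-1,0,1}. g i (x$i - k - v)) \<partial>lborel)"
    by (subst nn_integral_lborel_prod_cart) auto
  also have "\<dots> \<le> ennreal A * ennreal C0 * (\<Prod>i\<in>UNIV. ennreal (6 * ((2 * L i) powr (b+1) / (b+1))))"
  proof (intro mult_left_mono prod_mono_ennreal)
    fix i
    have "(\<integral>\<^sup>+v. (\<Sum>k\<in>{-1,0,1}. g i (x$i - k - v)) \<partial>lborel)
        = of_nat (card {-1,0,1::real}) * (\<integral>\<^sup>+u. g i u \<partial>lborel)"
      by (rule nn_integral_sum_translates) auto
    also have "\<dots> = 3 * (\<integral>\<^sup>+u. g i u \<partial>lborel)"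
      by simp
    also have "\<dots> \<le> 3 * ennreal (2 * ((2 * L i) powr (b+1) / (b+1)))"
      unfolding g_def using nn_integral_sing_powr_Icc[OF b] L by (intro mult_left_mono) auto
    also have "\<dots> = ennreal (3 * (2 * ((2 * L i) powr (b+1) / (b+1))))"
      using b by (subst ennreal_mult) auto
    also have "\<dots> = ennreal (6 * ((2 * L i) powr (b+1) / (b+1)))"
      by simp
    finally show "(\<integral>\<^sup>+v. (\<Sum>k\<in>{-1,0,1}. g i (x$i - k - v)) \<partial>lborel) \<le> ennreal (6 * ((2 * L i) powr (b+1) / (b+1)))" .
  qed simp_all
  also have "\<dots> = ennreal (A * C0 * (\<Prod>i\<in>UNIV. 6 * ((2 * L i) powr (b+1) / (b+1))))"
    using A C0 b by (simp add: prod_ennreal ennreal_mult prod_nonneg)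
  finally show ?thesis
    using A C0 b by (subst (asm) ennreal_le_iff) (auto intro!: mult_nonneg_nonneg prod_nonneg)
qed

lemma norm_pairing_le:
  fixes f :: "real^'n::finite \<Rightarrow> real" and K :: "real^'n \<Rightarrow> complex"
  assumes L: "\<forall>i. 0 \<le> L i \<and> L i \<le> 1" and b: "-1 < b" and A: "0 \<le> A" and C0: "0 \<le> C0"
    and K: "\<forall>z. ennreal (cmod (K z)) \<le> ennreal C0 * (\<Prod>i\<in>UNIV. sing_powr b (coord_dist T i (z$i)))"
    and f_supp: "\<forall>y. f y \<noteq> 0 \<longrightarrow> near_mod T L x0 y" and f_bound: "\<forall>y. \<bar>f y\<bar> \<le> A"
  shows "cmod (pairing T f K) \<le> A\<^sup>2 * C0 * (\<Prod>i\<in>UNIV. 60 * 2 powr (b+1) / (b+1) * L i powr (b+2))"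
proof -
  define B where "B = A * C0 * (\<Prod>i\<in>UNIV. 6 * ((2 * L i) powr (b+1) / (b+1)))"
  have B: "0 \<le> B" unfolding B_def using A C0 b by (auto intro!: mult_nonneg_nonneg prod_nonneg)
  define F where "F i = insert 0 (\<int> \<inter> {x0$i - 2 .. x0$i - 2 + real 3})" for i
  have F: "finite (F i) \<and> card (F i) \<le> 5" for i
    using finite_card_Ints_Icc[of "x0$i - 2" 3] unfolding F_def by (auto simp: card_insert_if)
  define h where "h i = (indicator {-L i..L i} :: real \<Rightarrow> ennreal)" for i
  have [measurable]: "h i \<in> borel_measurable borel" for i
    unfolding h_def by measurable
  have pointwise: "ennreal (norm (indicator (cell T) x *\<^sub>R (complex_of_real (f x) * conv T K f x)))
      \<le> ennreal A * ennreal B * (\<Prod>i\<in>UNIV. \<Sum>k\<in>F i. h i (x0$i - k - x$i))" for x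
  proof (cases "x \<in> cell T \<and> f x \<noteq> 0")
    case True
    hence x: "x \<in> cell T" "near_mod T L x0 x" using f_supp by auto
    have "ennreal \<bar>f x\<bar> * ennreal (cmod (conv T K f x)) \<le> ennreal A * ennreal B"
      using f_bound norm_conv_le[OF _ b A C0 K f_supp f_bound x] L
      unfolding B_def by (intro mult_mono) (auto intro: ennreal_leI)
    also have "\<dots> = ennreal A * ennreal B * (\<Prod>i\<in>(UNIV::'n set). 1)"
      by simp
    also have "\<dots> \<le> ennreal A * ennreal B * (\<Prod>i\<in>UNIV. \<Sum>k\<in>F i. h i (x0$i - k - x$i))"
      using one_le_sum_translates_indicator[OF _ x(2,1)] L unfolding F_def h_def
      by (intro mult_left_mono prod_mono_ennreal) auto
    finally show ?thesis
      using x by (simp add: norm_mult ennreal_mult[symmetric])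
  qed (auto simp: indicator_def)
  have "ennreal (cmod (pairing T f K))
      \<le> (\<integral>\<^sup>+x. ennreal A * ennreal B * (\<Prod>i\<in>UNIV. (\<lambda>v. \<Sum>k\<in>F i. h i (x0$i - k - v)) (x$i)) \<partial>lborel)"
    unfolding pairing_def by (rule order_trans[OF norm_integral_le_nn_integral nn_integral_mono[OF pointwise]])
  also have "\<dots> = ennreal A * ennreal B *
      (\<integral>\<^sup>+x. (\<Prod>i\<in>UNIV. (\<lambda>v. \<Sum>k\<in>F i. h i (x0$i - k - v)) (x$i)) \<partial>lborel)"
    by (rule nn_integral_cmult) measurable
  also have "\<dots> = ennreal A * ennreal B * (\<Prod>i\<in>UNIV. \<integral>\<^sup>+v. (\<Sum>k\<in>F i. h i (x0$i - k - v)) \<partial>lborel)"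
    by (subst nn_integral_lborel_prod_cart) auto
  also have "\<dots> \<le> ennreal A * ennreal B * (\<Prod>i\<in>UNIV. ennreal (10 * L i))"
  proof (intro mult_left_mono prod_mono_ennreal)
    fix i
    have "(\<integral>\<^sup>+v. (\<Sum>k\<in>F i. h i (x0$i - k - v)) \<partial>lborel) = of_nat (card (F i)) * ennreal (2 * L i)"
      using F L by (subst nn_integral_sum_translates) (simp_all add: h_def)
    also have "\<dots> \<le> of_nat 5 * ennreal (2 * L i)"
      using F by (intro mult_right_mono) auto
    also have "\<dots> = ennreal (5 * (2 * L i))"
      using L by (subst ennreal_mult) auto
    also have "\<dots> = ennreal (10 * L i)"
      by simp
    finally show "(\<integral>\<^sup>+v. (\<Sum>k\<in>F i. h i (x0$i - k - v)) \<partial>lborel) \<le> ennreal (10 * L i)" .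
  qed simp_all
  also have "\<dots> = ennreal A * ennreal B * ennreal (\<Prod>i\<in>UNIV. 10 * L i)"
    using L by (subst prod_ennreal) auto
  also have "\<dots> = ennreal (A * B * (\<Prod>i\<in>UNIV. 10 * L i))"
    using A B L by (simp add: ennreal_mult prod_nonneg)
  finally have "cmod (pairing T f K) \<le> A * B * (\<Prod>i\<in>UNIV. 10 * L i)"
    using A B L by (subst (asm) ennreal_le_iff) (auto intro!: mult_nonneg_nonneg prod_nonneg)
  also have "\<dots> = A\<^sup>2 * C0 * ((\<Prod>i\<in>UNIV. 6 * ((2 * L i) powr (b+1) / (b+1))) * (\<Prod>i\<in>UNIV. 10 * L i))"
    by (simp only: B_def power2_eq_square mult_ac)
  also have "(\<Prod>i\<in>UNIV. 6 * ((2 * L i) powr (b+1) / (b+1))) * (\<Prod>i\<in>UNIV. 10 * L i)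
      = (\<Prod>i\<in>UNIV. 6 * ((2 * L i) powr (b+1) / (b+1)) * (10 * L i))"
    by (rule prod.distrib[symmetric])
  also have "\<dots>
      = (\<Prod>i\<in>UNIV. 60 * 2 powr (b+1) / (b+1) * L i powr (b+2))"
  proof (rule prod.cong[OF refl])
    fix i
    have "L i powr (b+2) = L i powr (b+1) * L i"
      using L by (simp add: powr_add[of "L i" "b+1" 1, simplified add.assoc, simplified])
    thus "6 * ((2 * L i) powr (b+1) / (b+1)) * (10 * L i) = 60 * 2 powr (b+1) / (b+1) * L i powr (b+2)"
      using L by (simp add: powr_mult)
  qed
  finally show ?thesis .
qed

lemma kernel_class_bound:
  assumes "kernel_class s T zeta K"
  obtains C0 where "0 < C0" "\<forall>z. z \<notin> lattice T \<longrightarrow> tnorm s T z powr (- zeta) * cmod (K z) \<le> C0"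
proof -
  obtain C where "\<forall>is z. sum_list (map s is) \<le> 0 \<longrightarrow> z \<notin> lattice T \<longrightarrow>
      tnorm s T z powr (real (sum_list (map s is)) - zeta) * norm (Dlist is K z) \<le> C"
    using assms unfolding kernel_class_def by blast
  hence "\<forall>z. z \<notin> lattice T \<longrightarrow> tnorm s T z powr (- zeta) * cmod (K z) \<le> max C 1"
    by (metis Dlist.simps(1) diff_0 le_max_iff_disj list.map(1) of_nat_0 order_refl sum_list.Nil)
  thus thesis by (intro that[of "max C 1"]) auto
qed

lemma prod_powr_scaling:
  fixes s :: "'n::finite \<Rightarrow> nat"
  assumes "0 < l"
  shows "(\<Prod>i\<in>UNIV. (l powr real (s i)) powr a) = l powr (ssum s * a)"
  using assms by (simp add: powr_powr powr_sum[symmetric] ssum_def sum_distrib_right)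

lemma norm_pairing_periodize_scale_le:
  fixes s :: "'n::finite \<Rightarrow> nat" and K :: "real^'n \<Rightarrow> complex"
  assumes s_pos: "\<forall>i. 0 < s i" and zeta: "- ssum s < zeta" "zeta < 0"
    and K: "kernel_class s T zeta K"
  obtains D where "0 \<le> D" "\<And>x0 eta l. eta \<in> Bset s r \<Longrightarrow> 0 < l \<Longrightarrow> l \<le> 1 \<Longrightarrow>
    cmod (pairing T (periodize T (scale s l x0 eta)) K) \<le> D * l powr zeta"
proof -
  define S where "S = ssum s"
  have S: "0 < S" using ssum_pos[OF s_pos] by (simp add: S_def)
  define b where "b = zeta / S"
  have b: "-1 < b" "b \<le> 0" using zeta S by (auto simp: b_def field_simps S_def)
  obtain C0 where C0: "0 < C0" "\<forall>z. z \<notin> lattice T \<longrightarrow> tnorm s T z powr (- zeta) * cmod (K z) \<le> C0"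
    using kernel_class_bound[OF K] by blast
  have K_prod: "\<forall>z. ennreal (cmod (K z)) \<le> ennreal C0 * (\<Prod>i\<in>UNIV. sing_powr b (coord_dist T i (z$i)))"
    using kernel_bound_product[OF s_pos _ C0] zeta by (simp add: b_def S_def)
  define c where "c = 60 * 2 powr (b+1) / (b+1)"
  define D where "D = 25 ^ CARD('n) * C0 * c ^ CARD('n)"
  show thesis
  proof
    show "0 \<le> D" using C0 b by (simp add: D_def c_def)
    fix x0 eta and l :: real assume eta: "eta \<in> Bset s r" and l: "0 < l" "l \<le> 1"
    define L where "L i = l powr real (s i)" for i
    define A where "A = 5 ^ CARD('n) * l powr (- S)"
    have L: "\<forall>i. 0 \<le> L i \<and> L i \<le> 1" using l by (auto simp: L_def intro: powr_le1)
    have supp: "supp_in_box L x0 (scale s l x0 eta)"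
      unfolding L_def by (rule supp_in_box_scale[OF eta s_pos l(1)])
    have "cmod (pairing T (periodize T (scale s l x0 eta)) K) \<le> A\<^sup>2 * C0 * (\<Prod>i\<in>UNIV. c * L i powr (b+2))"
      unfolding c_def
    proof (rule norm_pairing_le[OF L b(1) _ _ K_prod])
      show "\<forall>y. periodize T (scale s l x0 eta) y \<noteq> 0 \<longrightarrow> near_mod T L x0 y"
        using periodize_nonzero_imp_near_mod[OF supp] by blast
      have "\<forall>z. \<bar>scale s l x0 eta z\<bar> \<le> l powr (- S)"
        using abs_scale_le[of eta l s x0] Bset_abs_le_1[OF eta s_pos] l by (simp add: S_def)
      thus "\<forall>y. \<bar>periodize T (scale s l x0 eta) y\<bar> \<le> A"
        using abs_periodize_le[OF supp] L by (simp add: A_def)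
    qed (use C0 in \<open>simp_all add: A_def\<close>)
    also have "(\<Prod>i\<in>UNIV. c * L i powr (b+2)) = c ^ CARD('n) * l powr (2 * S + zeta)"
      using prod_powr_scaling[OF l(1), of s "b+2"] S
      by (simp add: L_def prod.distrib b_def S_def field_simps)
    also have "A\<^sup>2 * C0 * (c ^ CARD('n) * l powr (2 * S + zeta)) = D * l powr zeta"
    proof -
      have "A\<^sup>2 = 25 ^ CARD('n) * l powr (- (2 * S))"
        unfolding A_def power2_eq_square
        by (simp add: power_mult_distrib[symmetric] powr_add[symmetric] mult_ac)
      moreover have "l powr (- (2 * S)) * l powr (2 * S + zeta) = l powr zeta"
        by (simp add: powr_add[symmetric])
      ultimately show ?thesis
        by (simp add: D_def mult_ac)
    qed
    finally show "cmod (pairing T (periodize T (scale s l x0 eta)) K) \<le> D * l powr zeta" .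
  qed
qed

lemma scaled_le_sqrt_if_square_le:
  fixes v l zeta :: real
  assumes "0 \<le> v" "v\<^sup>2 \<le> M * l powr zeta" "0 < l"
  shows "l powr (- (zeta / 2)) * v \<le> sqrt M"
proof -
  have "v \<le> sqrt (M * l powr zeta)"
    using assms(1,2) real_le_rsqrt by blast
  also have "\<dots> = sqrt M * l powr (zeta / 2)"
    using assms(3) by (simp add: real_sqrt_mult powr_half_sqrt[symmetric] powr_powr)
  finally show ?thesis
    using assms(3) by (simp add: powr_minus field_simps)
qed

lemma seminorm_xi_periodize_scale_le:
  fixes s :: "'n::finite \<Rightarrow> nat" and K :: "real^'n \<Rightarrow> complex"
    and xi :: "(real^'n \<Rightarrow> real) \<Rightarrow> 'e" and p :: "'e \<Rightarrow> real"
  assumes s_pos: "\<forall>i. 0 < s i" and zeta: "- ssum s < zeta" "zeta < 0"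
    and K: "kernel_class s T zeta K" and p: "\<forall>v. 0 \<le> p v"
    and C: "\<forall>f. test_fn T f \<longrightarrow> (p (xi f))\<^sup>2 \<le> C * cmod (pairing T f K)"
  obtains E where "\<And>x0 eta l. eta \<in> Bset s r \<Longrightarrow> 0 < l \<Longrightarrow> l \<le> 1 \<Longrightarrow>
    l powr (- (zeta / 2)) * p (xi (periodize T (scale s l x0 eta))) \<le> E"
proof -
  obtain D where D: "0 \<le> D" "\<And>x0 eta l. eta \<in> Bset s r \<Longrightarrow> 0 < l \<Longrightarrow> l \<le> 1 \<Longrightarrow>
      cmod (pairing T (periodize T (scale s l x0 eta)) K) \<le> D * l powr zeta"
    using norm_pairing_periodize_scale_le[OF s_pos zeta K, where r = r] by blast
  have "l powr (- (zeta / 2)) * p (xi (periodize T (scale s l x0 eta))) \<le> sqrt (max C 0 * D)"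
    if eta: "eta \<in> Bset s r" and l: "0 < l" "l \<le> 1" for x0 eta l
  proof (rule scaled_le_sqrt_if_square_le[OF p[rule_format] _ l(1)])
    have "(p (xi (periodize T (scale s l x0 eta))))\<^sup>2 \<le> C * cmod (pairing T (periodize T (scale s l x0 eta)) K)"
      using C test_fn_periodize_scale[OF eta s_pos l] by blast
    also have "\<dots> \<le> max C 0 * (D * l powr zeta)"
      using D(2)[OF eta l] by (intro mult_mono) auto
    finally show "(p (xi (periodize T (scale s l x0 eta))))\<^sup>2 \<le> max C 0 * D * l powr zeta"
      by (simp add: mult.assoc)
  qed
  thus thesis by (rule that)
qed

theorem propositionA11:
  fixes s :: "'n::finite \<Rightarrow> nat"
    and T :: "'n set"
    and P :: "('e::real_vector \<Rightarrow> real) set"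
    and xi :: "(real^'n \<Rightarrow> real) \<Rightarrow> 'e"
    and K :: "real^'n \<Rightarrow> complex"
    and zeta :: real
  assumes s_pos: "\<forall>i. 0 < s i"
    and P_semi: "\<forall>p\<in>P. is_seminorm p"
    and xi_distr: "distribution T P xi"
    and zeta_range: "- ssum s < zeta" "zeta < 0"
    and K_class: "kernel_class s T zeta K"
    and bound: "\<forall>p\<in>P. \<exists>C. \<forall>f. test_fn T f \<longrightarrow> (p (xi f))\<^sup>2 \<le> C * cmod (pairing T f K)"
  shows "holder_besov s (zeta / 2) P (\<lambda>phi. xi (periodize T phi))"
  unfolding holder_besov_def
proof (intro allI impI)
  fix r :: nat and Kc :: "(real^'n) set" and p
  assume "real r > \<bar>zeta / 2\<bar>" "compact Kc \<and> p \<in> P"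
  hence p: "p \<in> P" by simp
  obtain C where "\<forall>f. test_fn T f \<longrightarrow> (p (xi f))\<^sup>2 \<le> C * cmod (pairing T f K)"
    using bound p by blast
  moreover have "\<forall>v. 0 \<le> p v"
    using P_semi p by (simp add: is_seminorm_def)
  ultimately obtain E where E: "\<And>x0 eta l. eta \<in> Bset s r \<Longrightarrow> 0 < l \<Longrightarrow> l \<le> 1 \<Longrightarrow>
      l powr (- (zeta / 2)) * p (xi (periodize T (scale s l x0 eta))) \<le> E"
    using seminorm_xi_periodize_scale_le[OF s_pos zeta_range K_class] by blast
  show "(\<exists>C. \<forall>x\<in>Kc. \<forall>eta\<in>Bmom s r (zeta / 2). \<forall>l\<in>{0<..1}.
          l powr - (zeta / 2) * p (xi (periodize T (scale s l x eta))) \<le> C) \<and>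
        (\<exists>C. \<forall>x\<in>Kc. \<forall>eta\<in>Bset s r. p (xi (periodize T (scale s 1 x eta))) \<le> C)"
    using E E[of _ 1] by (intro conjI exI[of _ E]) (auto simp: Bmom_def)
qed

end
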